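(* Let $V$ be a topological real vector space and $N$ a Minkowski norm on $V$. The following are equivalent: (1) $N$ is strictly sub-convex. (2) $N$ is continuous, and for any two vectors $x\neq y$ in $V$ with $N(x)=N(y)=1$ one has $N\big((x+y)/2\big)<1$.
   Context: Topological real vector spaces are not assumed Hausdorff. A Minkowski norm on a real vector space $V$ is a function $N:V\to\mathbb{R}$ that is non-negative, satisfies $N(\lambda x)=\lambda N(x)$ for all $x\in V$ and real $\lambda>0$, satisfies $N(x+y)\le N(x)+N(y)$ for all $x,y$, and satisfies $N(x)\neq 0$ for $x\neq 0$. For $f:C\to\mathbb{R}$ and $r\in\mathbb{R}$, the sublevel set is $S_r(f)=\{x\in C: f(x)\le r\}$. For a subset $S$ of a topological real vector space, $\mathrm{Aff}(S)$ is its affine hull; the relative interior $\mathrm{ri}(S)$ and relative closure $\mathrm{rc}(S)$ are the interior and closure of $S$ in the subspace topology of $\mathrm{Aff}(S)$. For $x,y$, $]x,y[=\{(1-t)x+ty: t\in[0,1]\}\setminus\{x,y\}$. A subset $C$ is strictly convex if for any two distinct points $x,y\in\mathrm{rc}(C)$ one has $]x,y[\subseteq \mathrm{ri}(C)$. A function $f:C\to\mathbb{R}$ on a subset $C$ of a topological real vector space is strictly sub-convex if $S_r(f)$ is strictly convex for every $r\in\mathbb{R}$. *)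

theory Defs
  imports "HOL-Analysis.Analysis"
begin

text \<open>A topological real vector space (not assumed Hausdorff): the type carries a
  real vector space structure and a topology, and addition and scalar multiplication
  are jointly continuous (product topologies).\<close>
definition topological_real_vector_space :: "'a::{real_vector,topological_space} itself \<Rightarrow> bool" where
  "topological_real_vector_space _ \<longleftrightarrow>
     continuous_on UNIV (\<lambda>p::'a \<times> 'a. fst p + snd p) \<and>
     continuous_on UNIV (\<lambda>p::real \<times> 'a. fst p *\<^sub>R snd p)"

definition minkowski_norm :: "('a::real_vector \<Rightarrow> real) \<Rightarrow> bool" where
  "minkowski_norm N \<longleftrightarrow>
     (\<forall>x. 0 \<le> N x) \<and>
     (\<forall>x. \<forall>c::real. c > 0 \<longrightarrow> N (c *\<^sub>R x) = c * N x) \<and>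
     (\<forall>x y. N (x + y) \<le> N x + N y) \<and>
     (\<forall>x. x \<noteq> 0 \<longrightarrow> N x \<noteq> 0)"

definition sublevel_set :: "'a set \<Rightarrow> ('a \<Rightarrow> real) \<Rightarrow> real \<Rightarrow> 'a set" where
  "sublevel_set C f r = {x \<in> C. f x \<le> r}"

definition rel_int :: "'a::{real_vector,topological_space} set \<Rightarrow> 'a set" where
  "rel_int S = (top_of_set (affine hull S)) interior_of S"

definition rel_closure :: "'a::{real_vector,topological_space} set \<Rightarrow> 'a set" where
  "rel_closure S = (top_of_set (affine hull S)) closure_of S"

definition strictly_convex_set :: "'a::{real_vector,topological_space} set \<Rightarrow> bool" where
  "strictly_convex_set C \<longleftrightarrow>
     (\<forall>x\<in>rel_closure C. \<forall>y\<in>rel_closure C. x \<noteq> y \<longrightarrow> open_segment x y \<subseteq> rel_int C)"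

definition strictly_sub_convex ::
    "'a::{real_vector,topological_space} set \<Rightarrow> ('a \<Rightarrow> real) \<Rightarrow> bool" where
  "strictly_sub_convex C f \<longleftrightarrow> (\<forall>r::real. strictly_convex_set (sublevel_set C f r))"

end

theory Submission
  imports Defs
begin

text \<open>
  For \<open>r > 0\<close> the sublevel set \<open>{N \<le> r}\<close> is absorbing, so its affine hull is the whole space
  and relative interior and closure are the ordinary ones.

  If \<open>N\<close> is strictly sub-convex, the midpoint of two distinct unit vectors is interior to
  \<open>{N \<le> 1}\<close>, and interior points have \<open>N < 1\<close> because \<open>t \<mapsto> t z\<close> is continuous. Moreover
  \<open>0\<close> lies on the open segment between the points of norm \<open>e\<close> on a line through \<open>0\<close>, hence is
  interior to \<open>{N \<le> e}\<close> for every \<open>e > 0\<close>; together with subadditivity,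
  \<open>N x - N (x - y) \<le> N y \<le> N x + N (y - x)\<close>, this gives continuity.

  Conversely, continuity makes \<open>{N \<le> r}\<close> closed and \<open>{N < r}\<close> open, so it suffices that
  \<open>N < r\<close> on \<open>]x, y[\<close> when \<open>N x, N y \<le> r\<close>. The midpoint \<open>m\<close> satisfies \<open>N m < r\<close> (by scaling the
  hypothesis if \<open>N x = N y = r\<close>, by convexity otherwise), and every point of \<open>]x, y[\<close> is a
  proper convex combination of \<open>m\<close> and an endpoint.
\<close>

lemma minkowski_norm_nonneg: "minkowski_norm N \<Longrightarrow> 0 \<le> N x"
  by (simp add: minkowski_norm_def)

lemma minkowski_norm_triangle: "minkowski_norm N \<Longrightarrow> N (x + y) \<le> N x + N y"
  by (simp add: minkowski_norm_def)

lemma minkowski_norm_zero: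
  assumes "minkowski_norm N"
  shows "N 0 = 0"
proof -
  have "N (c *\<^sub>R x) = c * N x" if "0 < c" for c x
    using assms that by (simp add: minkowski_norm_def)
  from this[of 2 0] have "N ((2::real) *\<^sub>R 0) = 2 * N 0"
    by simp
  then show ?thesis by simp
qed

lemma minkowski_norm_scaleR:
  assumes "minkowski_norm N" and "0 \<le> c"
  shows "N (c *\<^sub>R x) = c * N x"
  using assms minkowski_norm_zero[OF assms(1)]
  by (cases "c = 0") (simp_all add: minkowski_norm_def)

lemma minkowski_norm_pos:
  assumes "minkowski_norm N" and "x \<noteq> 0"
  shows "0 < N x"
  using assms minkowski_norm_nonneg[OF assms(1), of x]
  by (simp add: minkowski_norm_def order_less_le)

lemma minkowski_norm_convex_comb:
  assumes "minkowski_norm N" and "0 \<le> t" and "t \<le> 1"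
  shows "N ((1 - t) *\<^sub>R x + t *\<^sub>R y) \<le> (1 - t) * N x + t * N y"
  using minkowski_norm_triangle[OF assms(1), of "(1 - t) *\<^sub>R x" "t *\<^sub>R y"]
  by (simp add: minkowski_norm_scaleR assms)

lemma sublevel_set_UNIV [simp]: "sublevel_set UNIV f r = {x. f x \<le> r}"
  by (simp add: sublevel_set_def)

lemma subset_rel_closure: "S \<subseteq> rel_closure S"
  unfolding rel_closure_def by (rule closure_of_subset) (simp add: hull_subset)

lemma rel_closure_subset_closure: "rel_closure S \<subseteq> closure S"
  unfolding rel_closure_def using closure_of_subtopology_subset[of euclidean] by simp

lemma interior_subset_rel_int: "interior S \<subseteq> rel_int S"
  using interior_of_subtopology_subset[of "affine hull S" euclidean S]
    interior_subset[of S] hull_subset[of S affine]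
  unfolding rel_int_def by auto

lemma rel_int_eq_interior: "affine hull S = UNIV \<Longrightarrow> rel_int S = interior S"
  by (simp add: rel_int_def)

lemma continuous_on_add_tvs:
  fixes f g :: "'b::topological_space \<Rightarrow> 'a::{real_vector,topological_space}"
  assumes "topological_real_vector_space TYPE('a)"
    and "continuous_on S f" and "continuous_on S g"
  shows "continuous_on S (\<lambda>x. f x + g x)"
  using continuous_on_compose2[of UNIV "\<lambda>p. fst p + snd p" S "\<lambda>x. (f x, g x)"]
    continuous_on_Pair[OF assms(2,3)] assms(1)
  by (simp add: topological_real_vector_space_def)

lemma continuous_on_scaleR_tvs:
  fixes f :: "'b::topological_space \<Rightarrow> real" and g :: "'b \<Rightarrow> 'a::{real_vector,topological_space}"
  assumes "topological_real_vector_space TYPE('a)"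
    and "continuous_on S f" and "continuous_on S g"
  shows "continuous_on S (\<lambda>x. f x *\<^sub>R g x)"
  using continuous_on_compose2[of UNIV "\<lambda>p. fst p *\<^sub>R snd p" S "\<lambda>x. (f x, g x)"]
    continuous_on_Pair[OF assms(2,3)] assms(1)
  by (simp add: topological_real_vector_space_def)

lemma continuous_on_diff_tvs:
  fixes f g :: "'b::topological_space \<Rightarrow> 'a::{real_vector,topological_space}"
  assumes tvs: "topological_real_vector_space TYPE('a)"
    and "continuous_on S f" and "continuous_on S g"
  shows "continuous_on S (\<lambda>x. f x - g x)"
proof -
  have "continuous_on S (\<lambda>x. f x + (-1) *\<^sub>R g x)"
    by (intro continuous_on_add_tvs[OF tvs] continuous_on_scaleR_tvs[OF tvs]
        continuous_on_const assms(2,3))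
  then show ?thesis
    by (simp only: scaleR_minus1_left diff_conv_add_uminus)
qed

lemma affine_hull_norm_sublevel:
  assumes mn: "minkowski_norm N" and "0 < r"
  shows "affine hull {x. N x \<le> r} = UNIV"
proof -
  let ?S = "{x. N x \<le> r}"
  have "0 \<in> affine hull ?S"
    using assms by (simp add: hull_inc minkowski_norm_zero)
  then have span_eq: "affine hull ?S = span ?S"
    by (rule affine_hull_span_0)
  have "v \<in> span ?S" for v
  proof (cases "v = 0")
    case False
    define c where "c = r / N v"
    have c: "0 < c"
      using minkowski_norm_pos[OF mn False] \<open>0 < r\<close> by (simp add: c_def)
    have "N (c *\<^sub>R v) = r"
      using minkowski_norm_pos[OF mn False] c by (simp add: minkowski_norm_scaleR[OF mn] c_def)
    then have "(1 / c) *\<^sub>R (c *\<^sub>R v) \<in> span ?S"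
      by (intro span_scale span_base) simp
    with c show ?thesis by simp
  qed (simp add: span_zero)
  with span_eq show ?thesis by auto
qed

lemma interior_norm_sublevel_lt:
  assumes tvs: "topological_real_vector_space TYPE('a::{real_vector,topological_space})"
    and mn: "minkowski_norm N" and "0 < r" and z: "(z::'a) \<in> interior {x. N x \<le> r}"
  shows "N z < r"
proof -
  let ?ray = "\<lambda>t::real. t *\<^sub>R z"
  have "open (?ray -` interior {x. N x \<le> r})"
    by (intro open_vimage open_interior continuous_on_scaleR_tvs[OF tvs]
        continuous_on_id continuous_on_const)
  moreover have "1 \<in> ?ray -` interior {x. N x \<le> r}"
    using z by simp
  ultimately obtain e where "0 < e" and e: "ball 1 e \<subseteq> ?ray -` interior {x. N x \<le> r}"
    by (metis openE)
  moreover have "1 + e/2 \<in> ball 1 e"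
    using \<open>0 < e\<close> by (simp add: dist_real_def)
  ultimately have "(1 + e/2) *\<^sub>R z \<in> {x. N x \<le> r}"
    using interior_subset by blast
  then have "(1 + e/2) * N z \<le> r"
    using \<open>0 < e\<close> by (simp add: minkowski_norm_scaleR[OF mn])
  then have "N z + (e/2) * N z \<le> r"
    by (simp add: algebra_simps)
  show ?thesis
  proof (rule ccontr)
    assume "\<not> N z < r"
    then have "0 < (e/2) * N z"
      using \<open>0 < e\<close> \<open>0 < r\<close> by simp
    with \<open>N z + (e/2) * N z \<le> r\<close> \<open>\<not> N z < r\<close> show False
      by linarith
  qed
qed

definition strict_unit_midpoints :: "('a::real_vector \<Rightarrow> real) \<Rightarrow> bool" where
  "strict_unit_midpoints N \<longleftrightarrow>
     (\<forall>x y. x \<noteq> y \<and> N x = 1 \<and> N y = 1 \<longrightarrow> N ((1/2) *\<^sub>R (x + y)) < 1)"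

lemma minkowski_norm_midpoint_lt:
  assumes mn: "minkowski_norm N"
    and mid: "strict_unit_midpoints N"
    and "x \<noteq> y" and "N x \<le> r" and "N y \<le> r"
  shows "N ((1/2) *\<^sub>R (x + y)) < r"
proof (cases "N x = r \<and> N y = r")
  case True
  have "0 < r"
    using True \<open>x \<noteq> y\<close> minkowski_norm_pos[OF mn] by (metis linorder_neqE_linordered_idom)
  have "N ((1/2) *\<^sub>R ((1/r) *\<^sub>R x + (1/r) *\<^sub>R y)) < 1"
    using mid \<open>x \<noteq> y\<close> True \<open>0 < r\<close>
    by (simp add: strict_unit_midpoints_def minkowski_norm_scaleR[OF mn])
  also have "(1/2) *\<^sub>R ((1/r) *\<^sub>R x + (1/r) *\<^sub>R y) = (1/r) *\<^sub>R ((1/2) *\<^sub>R (x + y))"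
    by (simp add: algebra_simps)
  finally show ?thesis
    using \<open>0 < r\<close> by (simp add: minkowski_norm_scaleR[OF mn] divide_less_eq)
next
  case False
  have "N ((1/2) *\<^sub>R (x + y)) \<le> (1/2) * N x + (1/2) * N y"
    using minkowski_norm_convex_comb[OF mn, of "1/2" x y] by (simp add: algebra_simps)
  with False assms(4,5) show ?thesis by linarith
qed

lemma minkowski_norm_le_midpoint_comb:
  assumes mn: "minkowski_norm N" and "0 \<le> t" and "t \<le> 1/2"
  shows "N ((1 - t) *\<^sub>R x + t *\<^sub>R y) \<le> (1 - 2*t) * N x + (2*t) * N ((1/2) *\<^sub>R (x + y))"
proof -
  have "(1 - t) *\<^sub>R x + t *\<^sub>R y = (1 - 2*t) *\<^sub>R x + (2*t) *\<^sub>R ((1/2) *\<^sub>R (x + y))"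
    by (simp add: algebra_simps flip: scaleR_2)
  then show ?thesis
    using minkowski_norm_convex_comb[OF mn, of "2*t" x "(1/2) *\<^sub>R (x + y)"] assms
    by (simp only:)
qed

lemma minkowski_norm_open_segment_lt:
  assumes mn: "minkowski_norm N"
    and mid: "strict_unit_midpoints N"
    and "N x \<le> r" and "N y \<le> r" and z: "z \<in> open_segment x y"
  shows "N z < r"
proof -
  have first_half: "N ((1 - t) *\<^sub>R a + t *\<^sub>R b) < r"
    if "a \<noteq> b" "N a \<le> r" "N b \<le> r" "0 < t" "t \<le> 1/2" for a b t
  proof -
    have "(2*t) * N ((1/2) *\<^sub>R (a + b)) < (2*t) * r"
      using minkowski_norm_midpoint_lt[OF mn mid \<open>a \<noteq> b\<close> \<open>N a \<le> r\<close> \<open>N b \<le> r\<close>] \<open>0 < t\<close>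
      by simp
    moreover have "(1 - 2*t) * N a \<le> (1 - 2*t) * r"
      using that by (intro mult_left_mono) auto
    moreover have "(1 - 2*t) * r + (2*t) * r = r"
      by (simp add: algebra_simps)
    ultimately show ?thesis
      using minkowski_norm_le_midpoint_comb[OF mn, of t a b] that by linarith
  qed
  obtain t where "x \<noteq> y" "0 < t" "t < 1" and z_eq: "z = (1 - t) *\<^sub>R x + t *\<^sub>R y"
    using z by (auto simp: in_segment)
  show ?thesis
  proof (cases "t \<le> 1/2")
    case True
    then show ?thesis using first_half[of x y t] assms z_eq \<open>x \<noteq> y\<close> \<open>0 < t\<close> by blast
  next
    case False
    have "z = (1 - (1 - t)) *\<^sub>R y + (1 - t) *\<^sub>R x"
      using z_eq by simp
    then show ?thesis using first_half[of y x "1 - t"] assms False \<open>x \<noteq> y\<close> \<open>t < 1\<close> by simp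
  qed
qed

lemma strictly_sub_convex_if_continuous_strict_unit_midpoints:
  assumes mn: "minkowski_norm N" and cont: "continuous_on UNIV N"
    and mid: "strict_unit_midpoints N"
  shows "strictly_sub_convex UNIV N"
  unfolding strictly_sub_convex_def strictly_convex_set_def
proof (intro allI ballI impI)
  fix r x y
  let ?S = "sublevel_set UNIV N r"
  have S_eq: "?S = {x. N x \<le> r}"
    by simp
  have "closed ?S"
    unfolding S_eq by (rule closed_Collect_le[OF cont continuous_on_const])
  then have closure_S: "rel_closure ?S \<subseteq> ?S"
    using rel_closure_subset_closure closure_closed by blast
  have "{x. N x < r} \<subseteq> interior ?S"
    unfolding S_eq by (rule interior_maximal) (auto intro: open_Collect_less[OF cont continuous_on_const])
  then have strict_in_rel_int: "{x. N x < r} \<subseteq> rel_int ?S"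
    using interior_subset_rel_int by blast
  assume "x \<in> rel_closure ?S" "y \<in> rel_closure ?S" "x \<noteq> y"
  then have "N x \<le> r" "N y \<le> r"
    using closure_S S_eq by auto
  then show "open_segment x y \<subseteq> rel_int ?S"
    using minkowski_norm_open_segment_lt[OF mn mid] strict_in_rel_int by blast
qed

lemma strictly_sub_convex_open_segment:
  assumes "strictly_sub_convex UNIV N" and "N x \<le> r" and "N y \<le> r" and "x \<noteq> y"
  shows "open_segment x y \<subseteq> rel_int {x. N x \<le> r}"
proof -
  have "strictly_convex_set (sublevel_set UNIV N r)"
    using assms(1) unfolding strictly_sub_convex_def by (rule spec)
  then have convex: "strictly_convex_set {x. N x \<le> r}"
    by simp
  have "x \<in> rel_closure {x. N x \<le> r}" "y \<in> rel_closure {x. N x \<le> r}"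
    using subset_rel_closure[of "{x. N x \<le> r}"] assms(2,3) by auto
  with convex \<open>x \<noteq> y\<close> show ?thesis
    unfolding strictly_convex_set_def by blast
qed

lemma strictly_sub_convex_strict_unit_midpoints:
  fixes N :: "'a::{real_vector,topological_space} \<Rightarrow> real"
  assumes tvs: "topological_real_vector_space TYPE('a)"
    and mn: "minkowski_norm N" and ssc: "strictly_sub_convex UNIV N"
  shows "strict_unit_midpoints N"
  unfolding strict_unit_midpoints_def
proof (intro allI impI, elim conjE)
  fix x y :: 'a
  assume "x \<noteq> y" "N x = 1" "N y = 1"
  have "(1/2) *\<^sub>R (x + y) \<in> open_segment x y"
    using \<open>x \<noteq> y\<close> unfolding in_segment
    by (intro conjI exI[of _ "1/2"]) (simp_all add: algebra_simps)
  then have "(1/2) *\<^sub>R (x + y) \<in> rel_int {x. N x \<le> 1}"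
    using strictly_sub_convex_open_segment[OF ssc, of x 1 y] \<open>x \<noteq> y\<close> \<open>N x = 1\<close> \<open>N y = 1\<close>
    by auto
  then have "(1/2) *\<^sub>R (x + y) \<in> interior {x. N x \<le> 1}"
    by (simp add: rel_int_eq_interior[OF affine_hull_norm_sublevel[OF mn zero_less_one]])
  then show "N ((1/2) *\<^sub>R (x + y)) < 1"
    by (rule interior_norm_sublevel_lt[OF tvs mn, rotated]) simp
qed

lemma minkowski_norm_level_segment_through_zero:
  fixes N :: "'a::real_vector \<Rightarrow> real" and v :: 'a
  assumes mn: "minkowski_norm N" and "v \<noteq> 0" and "0 < e"
  obtains a b where "a \<noteq> b" "N a = e" "N b = e" "0 \<in> open_segment a b"
proof -
  define \<alpha> where "\<alpha> = e / N v"
  define \<beta> where "\<beta> = e / N (- v)"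
  have "0 < N v" "0 < N (- v)"
    using minkowski_norm_pos[OF mn] \<open>v \<noteq> 0\<close> by auto
  then have "0 < \<alpha>" "0 < \<beta>"
    using \<open>0 < e\<close> by (simp_all add: \<alpha>_def \<beta>_def)
  have "N (\<alpha> *\<^sub>R v) = \<alpha> * N v"
    using \<open>0 < \<alpha>\<close> by (intro minkowski_norm_scaleR[OF mn]) simp
  moreover have "N (\<beta> *\<^sub>R (- v)) = \<beta> * N (- v)"
    using \<open>0 < \<beta>\<close> by (intro minkowski_norm_scaleR[OF mn]) simp
  ultimately have "N (\<alpha> *\<^sub>R v) = e" "N (\<beta> *\<^sub>R (- v)) = e"
    using \<open>0 < N v\<close> \<open>0 < N (- v)\<close> by (simp_all add: \<alpha>_def \<beta>_def)
  moreover have "\<alpha> *\<^sub>R v \<noteq> \<beta> *\<^sub>R (- v)"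
  proof
    assume "\<alpha> *\<^sub>R v = \<beta> *\<^sub>R (- v)"
    then have "(\<alpha> + \<beta>) *\<^sub>R v = 0"
      by (simp add: algebra_simps)
    with \<open>v \<noteq> 0\<close> \<open>0 < \<alpha>\<close> \<open>0 < \<beta>\<close> show False
      by simp
  qed
  moreover have "0 \<in> open_segment (\<alpha> *\<^sub>R v) (\<beta> *\<^sub>R (- v))"
  proof -
    define u where "u = \<alpha> / (\<alpha> + \<beta>)"
    have "(1 - u) *\<^sub>R (\<alpha> *\<^sub>R v) + u *\<^sub>R (\<beta> *\<^sub>R (- v)) = ((1 - u) * \<alpha> - u * \<beta>) *\<^sub>R v"
      by (simp add: algebra_simps)
    also have "(1 - u) * \<alpha> - u * \<beta> = 0"
      using \<open>0 < \<alpha>\<close> \<open>0 < \<beta>\<close> by (simp add: u_def field_simps)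
    finally have "0 = (1 - u) *\<^sub>R (\<alpha> *\<^sub>R v) + u *\<^sub>R (\<beta> *\<^sub>R (- v))"
      by simp
    moreover have "0 < u" "u < 1"
      using \<open>0 < \<alpha>\<close> \<open>0 < \<beta>\<close> by (simp_all add: u_def)
    ultimately show ?thesis
      using \<open>\<alpha> *\<^sub>R v \<noteq> \<beta> *\<^sub>R (- v)\<close> unfolding in_segment by blast
  qed
  ultimately show ?thesis
    using that by blast
qed

lemma strictly_sub_convex_zero_in_interior:
  fixes N :: "'a::{real_vector,topological_space} \<Rightarrow> real"
  assumes mn: "minkowski_norm N" and ssc: "strictly_sub_convex UNIV N" and "0 < e"
  shows "0 \<in> interior {x. N x \<le> e}"
proof (cases "\<exists>v::'a. v \<noteq> 0")
  case True
  then obtain v :: 'a where "v \<noteq> 0" by blast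
  then obtain a b where "a \<noteq> b" "N a = e" "N b = e" "0 \<in> open_segment a b"
    using minkowski_norm_level_segment_through_zero[OF mn _ \<open>0 < e\<close>] by blast
  then have "0 \<in> rel_int {x. N x \<le> e}"
    using strictly_sub_convex_open_segment[OF ssc, of a e b] by auto
  then show ?thesis
    using rel_int_eq_interior[OF affine_hull_norm_sublevel[OF mn \<open>0 < e\<close>]] by simp
next
  case False
  have "N x \<le> e" for x :: 'a
  proof -
    have "x = 0"
      using False by blast
    then show ?thesis
      using minkowski_norm_zero[OF mn] \<open>0 < e\<close> by simp
  qed
  then show ?thesis
    by simp
qed

lemma tendsto_minkowski_norm_zero:
  assumes mn: "minkowski_norm N" and "\<And>e. 0 < e \<Longrightarrow> 0 \<in> interior {x. N x \<le> e}"
  shows "(N \<longlongrightarrow> 0) (nhds 0)"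
  unfolding tendsto_iff eventually_nhds
proof (intro allI impI)
  fix e :: real assume "0 < e"
  then have "0 \<in> interior {x. N x \<le> e/2}"
    by (intro assms(2)) simp
  moreover have "\<forall>x \<in> interior {x. N x \<le> e/2}. dist (N x) 0 < e"
    using interior_subset minkowski_norm_nonneg[OF mn] \<open>0 < e\<close> by (fastforce simp: dist_real_def)
  ultimately show "\<exists>S. open S \<and> 0 \<in> S \<and> (\<forall>x\<in>S. dist (N x) 0 < e)"
    using open_interior by blast
qed

lemma continuous_on_minkowski_norm:
  fixes N :: "'a::{real_vector,topological_space} \<Rightarrow> real"
  assumes tvs: "topological_real_vector_space TYPE('a)" and mn: "minkowski_norm N"
    and N0: "(N \<longlongrightarrow> 0) (nhds 0)"
  shows "continuous_on UNIV N"
  unfolding continuous_on_def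
proof
  fix x :: 'a
  have "continuous_on UNIV (\<lambda>y. y - x)" "continuous_on UNIV (\<lambda>y. x - y)"
    by (intro continuous_on_diff_tvs[OF tvs] continuous_on_id continuous_on_const)+
  from this[unfolded continuous_on_def, THEN bspec, OF UNIV_I, of x]
  have "((\<lambda>y. y - x) \<longlongrightarrow> 0) (at x)" "((\<lambda>y. x - y) \<longlongrightarrow> 0) (at x)"
    by simp_all
  then have "((\<lambda>y. N (y - x)) \<longlongrightarrow> 0) (at x)" "((\<lambda>y. N (x - y)) \<longlongrightarrow> 0) (at x)"
    by (simp_all add: filterlim_compose[OF N0])
  from tendsto_add[OF tendsto_const this(1)] tendsto_diff[OF tendsto_const this(2)]
  have upper: "((\<lambda>y. N x + N (y - x)) \<longlongrightarrow> N x) (at x)"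
    and lower: "((\<lambda>y. N x - N (x - y)) \<longlongrightarrow> N x) (at x)"
    by simp_all
  have "N x - N (x - y) \<le> N y" "N y \<le> N x + N (y - x)" for y
    using minkowski_norm_triangle[OF mn, of "x - y" y] minkowski_norm_triangle[OF mn, of "y - x" x]
    by simp_all
  then have "\<forall>\<^sub>F y in at x. N x - N (x - y) \<le> N y" "\<forall>\<^sub>F y in at x. N y \<le> N x + N (y - x)"
    by (simp_all add: always_eventually)
  then show "(N \<longlongrightarrow> N x) (at x within UNIV)"
    by (rule tendsto_sandwich[OF _ _ lower upper])
qed

theorem mainTheorem1:
  fixes N :: "'a::{real_vector,topological_space} \<Rightarrow> real"
  assumes "topological_real_vector_space TYPE('a)"
    and "minkowski_norm N"
  shows "strictly_sub_convex UNIV N \<longleftrightarrow>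
         (continuous_on UNIV N \<and>
          (\<forall>x y. x \<noteq> y \<and> N x = 1 \<and> N y = 1 \<longrightarrow> N ((1/2) *\<^sub>R (x + y)) < 1))"
  unfolding strict_unit_midpoints_def[symmetric]
proof
  assume ssc: "strictly_sub_convex UNIV N"
  have "(N \<longlongrightarrow> 0) (nhds 0)"
    by (intro tendsto_minkowski_norm_zero[OF assms(2)] strictly_sub_convex_zero_in_interior[OF assms(2) ssc])
  then show "continuous_on UNIV N \<and> strict_unit_midpoints N"
    using continuous_on_minkowski_norm[OF assms] strictly_sub_convex_strict_unit_midpoints[OF assms ssc]
    by blast
next
  assume "continuous_on UNIV N \<and> strict_unit_midpoints N"
  then show "strictly_sub_convex UNIV N"
    using strictly_sub_convex_if_continuous_strict_unit_midpoints[OF assms(2)] by blast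
qed

end
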